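(* Suppose $\pi$ is an irreducible permutation on a finite alphabet $\mathcal{A}$ with $\pi=\pi^{-1}$. Then $\pi$ is Lagrangian, i.e. $H^\pi_V=\{x\in H^\pi:\omega(x,y)=0\text{ for all }y\in H^\pi_V\}$.
   Context: Let $\pi=(\pi_0,\pi_1)$ with bijections $\pi_\varepsilon:\mathcal{A}\to\{1,\dots,d\}$, irreducible (no $k<d$ with $\pi_0^{-1}(\{1..k\})=\pi_1^{-1}(\{1..k\})$); $\pi^{-1}=(\pi_1,\pi_0)$, and $\pi=\pi^{-1}$ means $\pi_1\circ\pi_0^{-1}$ is an involution. Define $\Omega=\Omega_\pi$ by $\Omega_{\alpha,\beta}=1$ if $\pi_0(\alpha)<\pi_0(\beta)$ and $\pi_1(\alpha)>\pi_1(\beta)$, $-1$ if $\pi_0(\alpha)>\pi_0(\beta)$ and $\pi_1(\alpha)<\pi_1(\beta)$, $0$ otherwise. Let $H^\pi=\Omega\mathbb{R}^{\mathcal{A}}$ with symplectic form $\omega(\Omega u,\Omega v)=u^t\Omega v$. Let $\pi_{\mathcal{A}}=\pi_0^{-1}\circ\pi_1$, $\mathbf{e}_{\mathcal{B}}=\sum_{\alpha\in\mathcal{B}}\mathbf{e}_\alpha$, $\mathbf{v}_{\mathcal{B}}=\Omega\mathbf{e}_{\mathcal{B}}$, and $H^\pi_V=\mathrm{span}\{\mathbf{v}_{\mathcal{B}}:\mathcal{B}\text{ an orbit of }\pi_{\mathcal{A}}\}$. *)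

theory Defs
  imports "HOL-Analysis.Analysis"
begin

text \<open>A permutation pi = (pi0, pi1) on a finite alphabet, given by the type 'a::finite;
  pi0, pi1 are bijections from the alphabet onto {1..d}, d = CARD('a).\<close>

definition is_perm_pair :: "('a::finite \<Rightarrow> nat) \<Rightarrow> ('a \<Rightarrow> nat) \<Rightarrow> bool" where
  "is_perm_pair p0 p1 \<longleftrightarrow>
     bij_betw p0 UNIV {1..CARD('a)} \<and> bij_betw p1 UNIV {1..CARD('a)}"

definition irreducible_perm :: "('a::finite \<Rightarrow> nat) \<Rightarrow> ('a \<Rightarrow> nat) \<Rightarrow> bool" where
  "irreducible_perm p0 p1 \<longleftrightarrow>
     \<not> (\<exists>k. 1 \<le> k \<and> k < CARD('a) \<and> p0 -` {1..k} = p1 -` {1..k})"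

text \<open>pi = pi^{-1}: the map pi1 o pi0^{-1} on {1..d} is an involution.\<close>
definition self_inverse_perm :: "('a::finite \<Rightarrow> nat) \<Rightarrow> ('a \<Rightarrow> nat) \<Rightarrow> bool" where
  "self_inverse_perm p0 p1 \<longleftrightarrow>
     (\<forall>i\<in>{1..CARD('a)}.
        (p1 \<circ> inv_into UNIV p0) ((p1 \<circ> inv_into UNIV p0) i) = i)"

definition Omega_mat :: "('a::finite \<Rightarrow> nat) \<Rightarrow> ('a \<Rightarrow> nat) \<Rightarrow> 'a \<Rightarrow> 'a \<Rightarrow> real" where
  "Omega_mat p0 p1 a b =
     (if p0 a < p0 b \<and> p1 a > p1 b then 1
      else if p0 a > p0 b \<and> p1 a < p1 b then -1 else 0)"

definition Omega_app :: "('a::finite \<Rightarrow> nat) \<Rightarrow> ('a \<Rightarrow> nat) \<Rightarrow> real^'a \<Rightarrow> real^'a" where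
  "Omega_app p0 p1 u = (\<chi> a. \<Sum>b\<in>UNIV. Omega_mat p0 p1 a b * u $ b)"

definition H_pi :: "('a::finite \<Rightarrow> nat) \<Rightarrow> ('a \<Rightarrow> nat) \<Rightarrow> (real^'a) set" where
  "H_pi p0 p1 = range (Omega_app p0 p1)"

definition omega_form :: "('a::finite \<Rightarrow> nat) \<Rightarrow> ('a \<Rightarrow> nat) \<Rightarrow> real^'a \<Rightarrow> real^'a \<Rightarrow> real" where
  "omega_form p0 p1 x y =
     (let u = (SOME u. Omega_app p0 p1 u = x); v = (SOME v. Omega_app p0 p1 v = y)
      in \<Sum>a\<in>UNIV. \<Sum>b\<in>UNIV. u $ a * Omega_mat p0 p1 a b * v $ b)"

definition pi_A :: "('a::finite \<Rightarrow> nat) \<Rightarrow> ('a \<Rightarrow> nat) \<Rightarrow> 'a \<Rightarrow> 'a" where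
  "pi_A p0 p1 = inv_into UNIV p0 \<circ> p1"

definition orbits_pi_A :: "('a::finite \<Rightarrow> nat) \<Rightarrow> ('a \<Rightarrow> nat) \<Rightarrow> 'a set set" where
  "orbits_pi_A p0 p1 = {{(pi_A p0 p1 ^^ n) a | n. True} | a. True}"

definition e_set :: "'a set \<Rightarrow> real^'a::finite" where
  "e_set B = (\<chi> a. if a \<in> B then 1 else 0)"

definition H_V :: "('a::finite \<Rightarrow> nat) \<Rightarrow> ('a \<Rightarrow> nat) \<Rightarrow> (real^'a) set" where
  "H_V p0 p1 = span ((\<lambda>B. Omega_app p0 p1 (e_set B)) ` orbits_pi_A p0 p1)"

definition lagrangian_perm :: "('a::finite \<Rightarrow> nat) \<Rightarrow> ('a \<Rightarrow> nat) \<Rightarrow> bool" where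
  "lagrangian_perm p0 p1 \<longleftrightarrow>
     H_V p0 p1 = {x \<in> H_pi p0 p1. \<forall>y\<in>H_V p0 p1. omega_form p0 p1 x y = 0}"

end

theory Submission
  imports Defs
begin

text \<open>Since pi = pi^-1, the map t = pi_A is an involution exchanging the two rows,
  pi_0 o t = pi_1 and pi_1 o t = pi_0, so that Omega(t a, t b) = - Omega(a, b).
  Hence Omega maps t-invariant vectors to t-anti-invariant ones and vice versa.
  The orbits of t are the pairs {a, t a}, whose indicators span the t-invariant vectors,
  so H_V is the image under Omega of the t-invariant vectors. As
  omega(Omega u, Omega w) = - <Omega u, w> and anti-invariant vectors are orthogonal to
  invariant ones, H_V is isotropic. Conversely, if Omega u is omega-orthogonal to H_V,
  it is orthogonal to every indicator of an orbit, i.e. anti-invariant; splitting u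
  into its invariant and anti-invariant parts, the image of the latter is then both
  invariant and anti-invariant, hence 0.\<close>

definition invariant_vecs :: "('a::finite \<Rightarrow> 'a) \<Rightarrow> (real^'a) set" where
  "invariant_vecs t = {v. \<forall>a. v $ t a = v $ a}"

definition anti_invariant_vecs :: "('a::finite \<Rightarrow> 'a) \<Rightarrow> (real^'a) set" where
  "anti_invariant_vecs t = {v. \<forall>a. v $ t a = - v $ a}"

lemma subspace_invariant_vecs: "subspace (invariant_vecs t)"
  unfolding subspace_def invariant_vecs_def by auto

lemma invariant_anti_invariant_eq_0:
  "v \<in> invariant_vecs t \<Longrightarrow> v \<in> anti_invariant_vecs t \<Longrightarrow> v = 0"
  unfolding invariant_vecs_def anti_invariant_vecs_def by (simp add: vec_eq_iff)

lemma invariant_anti_invariant_decomp: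
  assumes "\<And>a. t (t a) = a"
  obtains v w where "u = v + w" "v \<in> invariant_vecs t" "w \<in> anti_invariant_vecs t"
proof
  show "u = (\<chi> a. (u $ a + u $ t a) / 2) + (\<chi> a. (u $ a - u $ t a) / 2)"
    by (simp add: vec_eq_iff field_simps)
  show "(\<chi> a. (u $ a + u $ t a) / 2) \<in> invariant_vecs t"
    "(\<chi> a. (u $ a - u $ t a) / 2) \<in> anti_invariant_vecs t"
    unfolding invariant_vecs_def anti_invariant_vecs_def by (simp_all add: assms field_simps)
qed

lemma sum_reindex_involution:
  assumes "\<And>a. t (t a) = a"
  shows "sum f (UNIV::'a::finite set) = (\<Sum>a\<in>UNIV. f (t a))"
  by (rule sum.reindex_bij_witness[where i=t and j=t]) (auto simp: assms)

lemma inner_anti_invariant_invariant: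
  assumes t: "\<And>a. t (t a) = a"
    and "x \<in> anti_invariant_vecs t" "w \<in> invariant_vecs t"
  shows "x \<bullet> w = 0"
proof -
  have "x \<bullet> w = (\<Sum>a\<in>UNIV. x $ t a * w $ t a)"
    unfolding inner_vec_def inner_real_def by (rule sum_reindex_involution[OF t])
  also have "\<dots> = - (x \<bullet> w)"
    using assms(2,3) by (simp add: invariant_vecs_def anti_invariant_vecs_def inner_vec_def sum_negf)
  finally show ?thesis by simp
qed

lemma funpow_involution:
  assumes "\<And>a. t (t a) = a"
  shows "(t ^^ n) a = (if even n then a else t a)"
  by (induction n) (simp_all add: assms)

lemma orbit_involution:
  assumes "\<And>a. t (t a) = a"
  shows "{(t ^^ n) a | n. True} = {a, t a}"
proof
  show "{(t ^^ n) a | n. True} \<subseteq> {a, t a}"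
    by (auto simp: funpow_involution[OF assms])
  have "a = (t ^^ 0) a" "t a = (t ^^ 1) a" by simp_all
  then show "{a, t a} \<subseteq> {(t ^^ n) a | n. True}" by blast
qed

lemma e_set_orbit_invariant:
  assumes "\<And>a. t (t a) = a"
  shows "e_set {a, t a} \<in> invariant_vecs t"
  unfolding invariant_vecs_def e_set_def using assms by auto metis+

lemma inner_e_set_orbit:
  "x \<bullet> e_set {a, t a} = (if t a = a then x $ a else x $ a + x $ t a)"
proof -
  have "{b. b = a \<or> b = t a} = {a, t a}" by auto
  then show ?thesis
    unfolding inner_vec_def e_set_def by (auto simp: if_distrib sum.If_cases)
qed

lemma anti_invariant_if_orthogonal_orbits:
  assumes "\<And>a. x \<bullet> e_set {a, t a} = 0"
  shows "x \<in> anti_invariant_vecs t"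
  unfolding anti_invariant_vecs_def using assms
  by (auto simp: inner_e_set_orbit split: if_splits) (metis add_eq_0_iff neg_0_equal_iff_equal)

text \<open>The indicator of a two-element orbit {b, t b} is hit by both a = b and a = t b,
  hence the halved coefficients off the fixed points of t.\<close>

lemma invariant_vec_eq_sum_e_set:
  assumes t: "\<And>a. t (t a) = a" and v: "v \<in> invariant_vecs t"
  defines "c \<equiv> \<lambda>a. if t a = a then v $ a else v $ a / 2"
  shows "v = (\<Sum>a\<in>UNIV. c a *\<^sub>R e_set {a, t a})"
proof (subst vec_eq_iff, intro allI)
  fix b
  have "c a * e_set {a, t a} $ b = (if a \<in> {b, t b} then c a else 0)" for a
    unfolding e_set_def using t by auto
  then have "(\<Sum>a\<in>UNIV. c a *\<^sub>R e_set {a, t a}) $ b = (\<Sum>a\<in>UNIV. if a \<in> {b, t b} then c a else 0)"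
    by (simp add: sum_component)
  also have "\<dots> = sum c {b, t b}"
    using sum.inter_restrict[of UNIV c "{b, t b}"] by simp
  also have "\<dots> = v $ b"
    using v t[of b] by (cases "t b = b") (auto simp: c_def invariant_vecs_def)
  finally show "v $ b = (\<Sum>a\<in>UNIV. c a *\<^sub>R e_set {a, t a}) $ b" by simp
qed

lemma span_e_set_orbits:
  assumes t: "\<And>a. t (t a) = a"
  shows "span ((\<lambda>a. e_set {a, t a}) ` UNIV) = invariant_vecs t"
proof
  show "span ((\<lambda>a. e_set {a, t a}) ` UNIV) \<subseteq> invariant_vecs t"
    using e_set_orbit_invariant[OF t] subspace_invariant_vecs
    by (intro span_minimal) auto
  show "invariant_vecs t \<subseteq> span ((\<lambda>a. e_set {a, t a}) ` UNIV)"
  proof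
    fix v assume "v \<in> invariant_vecs t"
    then show "v \<in> span ((\<lambda>a. e_set {a, t a}) ` UNIV)"
      by (subst invariant_vec_eq_sum_e_set[OF t]) (auto intro: span_sum span_mul span_base)
  qed
qed

lemma Omega_mat_antisym: "Omega_mat p0 p1 a b = - Omega_mat p0 p1 b a"
  unfolding Omega_mat_def by auto

lemma linear_Omega_app: "linear (Omega_app p0 p1)"
  by (rule linearI) (simp_all add: Omega_app_def vec_eq_iff sum.distrib sum_distrib_left algebra_simps)

lemma Omega_bilinear_eq_inner_right:
  "(\<Sum>a\<in>UNIV. \<Sum>b\<in>UNIV. u $ a * Omega_mat p0 p1 a b * v $ b) = u \<bullet> Omega_app p0 p1 v"
  unfolding Omega_app_def inner_vec_def by (simp add: sum_distrib_left mult.assoc)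

lemma Omega_bilinear_eq_inner_left:
  "(\<Sum>a\<in>UNIV. \<Sum>b\<in>UNIV. u $ a * Omega_mat p0 p1 a b * v $ b) = - (Omega_app p0 p1 u \<bullet> v)"
proof -
  have "(\<Sum>a\<in>UNIV. \<Sum>b\<in>UNIV. u $ a * Omega_mat p0 p1 a b * v $ b)
      = (\<Sum>b\<in>UNIV. \<Sum>a\<in>UNIV. u $ a * Omega_mat p0 p1 a b * v $ b)"
    by (rule sum.swap)
  also have "\<dots> = (\<Sum>b\<in>UNIV. - ((\<Sum>a\<in>UNIV. Omega_mat p0 p1 b a * u $ a) * v $ b))"
  proof (rule sum.cong[OF refl])
    fix b
    have "u $ a * Omega_mat p0 p1 a b * v $ b = - (Omega_mat p0 p1 b a * u $ a * v $ b)" for a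
      by (subst Omega_mat_antisym) simp
    then show "(\<Sum>a\<in>UNIV. u $ a * Omega_mat p0 p1 a b * v $ b)
        = - ((\<Sum>a\<in>UNIV. Omega_mat p0 p1 b a * u $ a) * v $ b)"
      by (simp add: sum_negf sum_distrib_right)
  qed
  also have "\<dots> = - (Omega_app p0 p1 u \<bullet> v)"
    unfolding Omega_app_def inner_vec_def by (simp add: sum_negf)
  finally show ?thesis .
qed

text \<open>Omega need not be injective, but the preimages chosen by SOME do not matter:
  the bilinear form only sees the first one through Omega u and the second through Omega v.\<close>

lemma omega_form_Omega_app:
  "omega_form p0 p1 (Omega_app p0 p1 u) (Omega_app p0 p1 w) = - (Omega_app p0 p1 u \<bullet> w)"
proof -
  define u' where "u' = (SOME u'. Omega_app p0 p1 u' = Omega_app p0 p1 u)"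
  define w' where "w' = (SOME w'. Omega_app p0 p1 w' = Omega_app p0 p1 w)"
  have u': "Omega_app p0 p1 u' = Omega_app p0 p1 u"
    unfolding u'_def by (rule someI) (rule refl)
  have w': "Omega_app p0 p1 w' = Omega_app p0 p1 w"
    unfolding w'_def by (rule someI) (rule refl)
  have "omega_form p0 p1 (Omega_app p0 p1 u) (Omega_app p0 p1 w)
      = (\<Sum>a\<in>UNIV. \<Sum>b\<in>UNIV. u' $ a * Omega_mat p0 p1 a b * w' $ b)"
    by (simp only: omega_form_def Let_def u'_def w'_def)
  also have "\<dots> = (\<Sum>a\<in>UNIV. \<Sum>b\<in>UNIV. u' $ a * Omega_mat p0 p1 a b * w $ b)"
    by (simp only: Omega_bilinear_eq_inner_right w')
  also have "\<dots> = - (Omega_app p0 p1 u \<bullet> w)"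
    by (simp only: Omega_bilinear_eq_inner_left u')
  finally show ?thesis .
qed

lemma Omega_app_eigenvec:
  assumes t: "\<And>a. t (t a) = a"
    and om: "\<And>a b. Omega_mat p0 p1 (t a) (t b) = - Omega_mat p0 p1 a b"
    and u: "\<And>a. u $ t a = s * u $ a"
  shows "Omega_app p0 p1 u $ t b = - s * Omega_app p0 p1 u $ b"
proof -
  have "Omega_app p0 p1 u $ t b = (\<Sum>c\<in>UNIV. Omega_mat p0 p1 (t b) c * u $ c)"
    by (simp add: Omega_app_def)
  also have "\<dots> = (\<Sum>c\<in>UNIV. Omega_mat p0 p1 (t b) (t c) * u $ t c)"
    by (rule sum_reindex_involution[OF t])
  also have "\<dots> = (\<Sum>c\<in>UNIV. - s * (Omega_mat p0 p1 b c * u $ c))"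
    by (intro sum.cong refl) (simp add: om u)
  also have "\<dots> = - s * Omega_app p0 p1 u $ b"
    by (simp add: Omega_app_def sum_distrib_left)
  finally show ?thesis .
qed

lemma Omega_app_invariant:
  assumes "\<And>a. t (t a) = a" "\<And>a b. Omega_mat p0 p1 (t a) (t b) = - Omega_mat p0 p1 a b"
    and "u \<in> invariant_vecs t"
  shows "Omega_app p0 p1 u \<in> anti_invariant_vecs t"
  using Omega_app_eigenvec[OF assms(1,2), of u 1] assms(3)
  by (simp add: invariant_vecs_def anti_invariant_vecs_def)

lemma Omega_app_anti_invariant:
  assumes "\<And>a. t (t a) = a" "\<And>a b. Omega_mat p0 p1 (t a) (t b) = - Omega_mat p0 p1 a b"
    and "u \<in> anti_invariant_vecs t"
  shows "Omega_app p0 p1 u \<in> invariant_vecs t"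
  using Omega_app_eigenvec[OF assms(1,2), of u "-1"] assms(3)
  by (simp add: invariant_vecs_def anti_invariant_vecs_def)

lemma omega_form_Omega_app_invariant_eq_0:
  assumes t: "\<And>a. t (t a) = a"
    and om: "\<And>a b. Omega_mat p0 p1 (t a) (t b) = - Omega_mat p0 p1 a b"
    and u: "u \<in> invariant_vecs t" and w: "w \<in> invariant_vecs t"
  shows "omega_form p0 p1 (Omega_app p0 p1 u) (Omega_app p0 p1 w) = 0"
  using inner_anti_invariant_invariant[OF t Omega_app_invariant[OF t om u] w]
  by (simp add: omega_form_Omega_app)

lemma omega_orthogonal_in_image_invariant:
  assumes t: "\<And>a. t (t a) = a"
    and om: "\<And>a b. Omega_mat p0 p1 (t a) (t b) = - Omega_mat p0 p1 a b"
    and "x \<in> H_pi p0 p1"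
    and orth: "\<And>a. omega_form p0 p1 x (Omega_app p0 p1 (e_set {a, t a})) = 0"
  shows "x \<in> Omega_app p0 p1 ` invariant_vecs t"
proof -
  obtain u where x: "x = Omega_app p0 p1 u"
    using assms(3) unfolding H_pi_def by auto
  have x_anti: "x \<in> anti_invariant_vecs t"
    using orth by (intro anti_invariant_if_orthogonal_orbits) (simp add: x omega_form_Omega_app)
  obtain v w where u: "u = v + w" and v: "v \<in> invariant_vecs t" and w: "w \<in> anti_invariant_vecs t"
    using invariant_anti_invariant_decomp[OF t] .
  have x_split: "x = Omega_app p0 p1 v + Omega_app p0 p1 w"
    unfolding x u by (rule linear_add[OF linear_Omega_app])
  have "x - Omega_app p0 p1 v \<in> anti_invariant_vecs t"
    using x_anti Omega_app_invariant[OF t om v] by (simp add: anti_invariant_vecs_def)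
  then have "Omega_app p0 p1 w = 0"
    using x_split Omega_app_anti_invariant[OF t om w] invariant_anti_invariant_eq_0 by force
  with v x_split show ?thesis by simp
qed

lemma p0_pi_A:
  assumes "is_perm_pair p0 p1"
  shows "p0 (pi_A p0 p1 a) = p1 a"
proof -
  have "p1 a \<in> range p0"
    using assms unfolding is_perm_pair_def bij_betw_def by auto
  then show ?thesis by (simp add: pi_A_def f_inv_into_f)
qed

lemma pi_A_involution:
  assumes "is_perm_pair p0 p1" "self_inverse_perm p0 p1"
  shows "pi_A p0 p1 (pi_A p0 p1 a) = a"
proof -
  have "p1 a \<in> {1..CARD('a)}"
    using assms(1) unfolding is_perm_pair_def bij_betw_def by auto
  then have "p1 (pi_A p0 p1 (pi_A p0 p1 a)) = p1 a"
    using assms(2) unfolding self_inverse_perm_def pi_A_def by auto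
  moreover have "inj p1"
    using assms(1) by (simp add: is_perm_pair_def bij_betw_def)
  ultimately show ?thesis by (simp add: inj_eq)
qed

lemma p1_pi_A:
  assumes "is_perm_pair p0 p1" "self_inverse_perm p0 p1"
  shows "p1 (pi_A p0 p1 a) = p0 a"
  using p0_pi_A[OF assms(1), of "pi_A p0 p1 a"] pi_A_involution[OF assms] by simp

lemma Omega_mat_swap_rows:
  assumes "\<And>a. p0 (t a) = p1 a" "\<And>a. p1 (t a) = p0 a"
  shows "Omega_mat p0 p1 (t a) (t b) = - Omega_mat p0 p1 a b"
  unfolding Omega_mat_def assms by auto

lemma orbits_pi_A_involution:
  assumes "\<And>a. pi_A p0 p1 (pi_A p0 p1 a) = a"
  shows "orbits_pi_A p0 p1 = (\<lambda>a. {a, pi_A p0 p1 a}) ` UNIV"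
  unfolding orbits_pi_A_def orbit_involution[OF assms] by auto

lemma H_V_involution:
  assumes t: "\<And>a. pi_A p0 p1 (pi_A p0 p1 a) = a"
  shows "H_V p0 p1 = Omega_app p0 p1 ` invariant_vecs (pi_A p0 p1)"
proof -
  have "H_V p0 p1 = span (Omega_app p0 p1 ` (\<lambda>a. e_set {a, pi_A p0 p1 a}) ` UNIV)"
    unfolding H_V_def orbits_pi_A_involution[OF t] image_comp by (simp add: o_def)
  also have "\<dots> = Omega_app p0 p1 ` span ((\<lambda>a. e_set {a, pi_A p0 p1 a}) ` UNIV)"
    by (rule span_linear_image[OF linear_Omega_app])
  finally show ?thesis
    by (simp only: span_e_set_orbits[OF t])
qed

theorem mainTheorem8:
  fixes p0 p1 :: "'a::finite \<Rightarrow> nat"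
  assumes "is_perm_pair p0 p1"
    and "irreducible_perm p0 p1"
    and "self_inverse_perm p0 p1"
  shows "lagrangian_perm p0 p1"
proof -
  let ?t = "pi_A p0 p1"
  have t: "\<And>a. ?t (?t a) = a"
    using pi_A_involution[OF assms(1,3)] .
  have om: "\<And>a b. Omega_mat p0 p1 (?t a) (?t b) = - Omega_mat p0 p1 a b"
    by (rule Omega_mat_swap_rows) (simp_all add: p0_pi_A p1_pi_A assms(1,3))
  have orbit_in_H_V: "Omega_app p0 p1 (e_set {a, ?t a}) \<in> H_V p0 p1" for a
    using e_set_orbit_invariant[OF t] H_V_involution[OF t] by auto
  show ?thesis
    unfolding lagrangian_perm_def
  proof (intro set_eqI iffI)
    fix x assume "x \<in> H_V p0 p1"
    then show "x \<in> {x \<in> H_pi p0 p1. \<forall>y\<in>H_V p0 p1. omega_form p0 p1 x y = 0}"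
      unfolding H_V_involution[OF t] H_pi_def
      using omega_form_Omega_app_invariant_eq_0[OF t om] by auto
  next
    fix x assume x: "x \<in> {x \<in> H_pi p0 p1. \<forall>y\<in>H_V p0 p1. omega_form p0 p1 x y = 0}"
    then have "omega_form p0 p1 x (Omega_app p0 p1 (e_set {a, ?t a})) = 0" for a
      using orbit_in_H_V by blast
    with x show "x \<in> H_V p0 p1"
      unfolding H_V_involution[OF t] using omega_orthogonal_in_image_invariant[OF t om] by blast
  qed
qed

end
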